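(* The functor $\mathcal M_{\max}$ is (admits the structure of) a lax monoidal functor from $(\mathbf{Ord},\times,(\mathbf 1,=))$ to $(\mathbf{Ord},\times,(\mathbf 1,=))$.
   Context: $\mathbf{Ord}$ is the category of posets and monotone maps, with the cartesian product $\times$ (product order) and the one-point poset $\mathbf 1$ as monoidal structure. For a poset $(X,\le_X)$, $\mathcal M(X)$ is the set of nonempty finite subsets of $X$ whose elements are pairwise incomparable, ordered by $S\le_{\mathcal M(X)}T$ iff every $x\in S$ has some $y\in T$ with $x\le_X y$. For $S\subseteq X$, $S^{\circ}$ is the set of maximal elements of $S$. The functor $\mathcal M_{\max}:\mathbf{Ord}\to\mathbf{Ord}$ is $\mathcal M_{\max}(X)=(\mathcal M(X),\le_{\mathcal M(X)})$, $\mathcal M_{\max}(f)(S)=(f(S))^{\circ}$. *)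

theory Defs
  imports Main
begin

text \<open>Objects of Ord: a carrier set together with a partial order on it.
  Morphisms: monotone maps between carriers (compared extensionally on carriers).\<close>

definition poset :: "'a set \<Rightarrow> ('a \<Rightarrow> 'a \<Rightarrow> bool) \<Rightarrow> bool" where
  "poset X le \<longleftrightarrow>
     (\<forall>x\<in>X. le x x) \<and>
     (\<forall>x\<in>X. \<forall>y\<in>X. le x y \<and> le y x \<longrightarrow> x = y) \<and>
     (\<forall>x\<in>X. \<forall>y\<in>X. \<forall>z\<in>X. le x y \<and> le y z \<longrightarrow> le x z)"

definition monotone_map ::
  "'a set \<Rightarrow> ('a \<Rightarrow> 'a \<Rightarrow> bool) \<Rightarrow> 'b set \<Rightarrow> ('b \<Rightarrow> 'b \<Rightarrow> bool) \<Rightarrow> ('a \<Rightarrow> 'b) \<Rightarrow> bool" where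
  "monotone_map X leX Y leY f \<longleftrightarrow>
     (\<forall>x\<in>X. f x \<in> Y) \<and> (\<forall>x\<in>X. \<forall>y\<in>X. leX x y \<longrightarrow> leY (f x) (f y))"

definition prod_le :: "('a \<Rightarrow> 'a \<Rightarrow> bool) \<Rightarrow> ('b \<Rightarrow> 'b \<Rightarrow> bool) \<Rightarrow> 'a \<times> 'b \<Rightarrow> 'a \<times> 'b \<Rightarrow> bool" where
  "prod_le leX leY p q \<longleftrightarrow> leX (fst p) (fst q) \<and> leY (snd p) (snd q)"

definition unit_le :: "unit \<Rightarrow> unit \<Rightarrow> bool" where
  "unit_le x y \<longleftrightarrow> x = y"

definition assoc_map :: "('a \<times> 'b) \<times> 'c \<Rightarrow> 'a \<times> ('b \<times> 'c)" where
  "assoc_map p = (fst (fst p), (snd (fst p), snd p))"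

definition lunit_map :: "unit \<times> 'a \<Rightarrow> 'a" where
  "lunit_map p = snd p"

definition runit_map :: "'a \<times> unit \<Rightarrow> 'a" where
  "runit_map p = fst p"

definition Mset :: "'a set \<Rightarrow> ('a \<Rightarrow> 'a \<Rightarrow> bool) \<Rightarrow> 'a set set" where
  "Mset X le = {S. S \<subseteq> X \<and> finite S \<and> S \<noteq> {} \<and>
                   (\<forall>x\<in>S. \<forall>y\<in>S. x \<noteq> y \<longrightarrow> \<not> le x y \<and> \<not> le y x)}"

definition Mle :: "('a \<Rightarrow> 'a \<Rightarrow> bool) \<Rightarrow> 'a set \<Rightarrow> 'a set \<Rightarrow> bool" where
  "Mle le S T \<longleftrightarrow> (\<forall>x\<in>S. \<exists>y\<in>T. le x y)"

definition maxel :: "('a \<Rightarrow> 'a \<Rightarrow> bool) \<Rightarrow> 'a set \<Rightarrow> 'a set" where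
  "maxel le S = {x \<in> S. \<not> (\<exists>y\<in>S. le x y \<and> y \<noteq> x)}"

definition Mmax_map :: "('b \<Rightarrow> 'b \<Rightarrow> bool) \<Rightarrow> ('a \<Rightarrow> 'b) \<Rightarrow> 'a set \<Rightarrow> 'b set" where
  "Mmax_map leY f S = maxel leY (f ` S)"

definition Mmu :: "'a set \<Rightarrow> 'b set \<Rightarrow> ('a \<times> 'b) set" where
  "Mmu S T = S \<times> T"

definition Meps :: "unit \<Rightarrow> unit set" where
  "Meps u = {u}"

end

theory Submission
  imports Defs
begin

text \<open>An antichain consists of maximal elements only; this gives
  the identity law and the coherence equations, since the structure maps send \<open>(S \<times> T) \<times> U\<close>,
  \<open>{()} \<times> S\<close> and \<open>S \<times> {()}\<close> bijectively onto antichains. The maximal elements of \<open>A \<times> B\<close> in the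
  product order are pairs of maximal elements; this is the naturality of \<open>\<mu>\<close>. In a finite poset
  every element lies below a maximal one, so for monotone \<open>h\<close> the maximal elements of \<open>h(A)\<close>
  are already those of \<open>h(A\<^sup>\<circ>)\<close>; this gives monotonicity of \<open>M\<^sub>m\<^sub>a\<^sub>x(f)\<close> and the composition
  law.\<close>

definition antichain :: "('a \<Rightarrow> 'a \<Rightarrow> bool) \<Rightarrow> 'a set \<Rightarrow> bool" where
  "antichain le S \<longleftrightarrow> (\<forall>x\<in>S. \<forall>y\<in>S. x \<noteq> y \<longrightarrow> \<not> le x y \<and> \<not> le y x)"

lemma Mset_iff: "S \<in> Mset X le \<longleftrightarrow> S \<subseteq> X \<and> finite S \<and> S \<noteq> {} \<and> antichain le S"
  by (simp add: Mset_def antichain_def)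

lemma poset_refl: "poset X le \<Longrightarrow> x \<in> X \<Longrightarrow> le x x"
  unfolding poset_def by blast

lemma poset_antisym: "poset X le \<Longrightarrow> x \<in> X \<Longrightarrow> y \<in> X \<Longrightarrow> le x y \<Longrightarrow> le y x \<Longrightarrow> x = y"
  unfolding poset_def by blast

lemma poset_trans:
  "poset X le \<Longrightarrow> x \<in> X \<Longrightarrow> y \<in> X \<Longrightarrow> z \<in> X \<Longrightarrow> le x y \<Longrightarrow> le y z \<Longrightarrow> le x z"
  unfolding poset_def by blast

lemma monotone_mapD:
  "monotone_map X leX Y leY f \<Longrightarrow> x \<in> X \<Longrightarrow> y \<in> X \<Longrightarrow> leX x y \<Longrightarrow> leY (f x) (f y)"
  unfolding monotone_map_def by blast

lemma monotone_map_image_subset: "monotone_map X leX Y leY f \<Longrightarrow> A \<subseteq> X \<Longrightarrow> f ` A \<subseteq> Y"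
  unfolding monotone_map_def by blast

lemma antichain_Times: "antichain le1 A \<Longrightarrow> antichain le2 B \<Longrightarrow> antichain (prod_le le1 le2) (A \<times> B)"
  unfolding antichain_def prod_le_def by fastforce

lemma maxelI: "x \<in> A \<Longrightarrow> (\<And>y. y \<in> A \<Longrightarrow> le x y \<Longrightarrow> y = x) \<Longrightarrow> x \<in> maxel le A"
  unfolding maxel_def by blast

lemma maxelD: "x \<in> maxel le A \<Longrightarrow> y \<in> A \<Longrightarrow> le x y \<Longrightarrow> y = x"
  unfolding maxel_def by blast

lemma maxel_memD: "x \<in> maxel le A \<Longrightarrow> x \<in> A"
  unfolding maxel_def by blast

lemma maxel_subset: "maxel le A \<subseteq> A"
  unfolding maxel_def by blast

lemma antichain_maxel: "antichain le (maxel le A)"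
  unfolding maxel_def antichain_def by blast

lemma maxel_antichain_eq: "antichain le A \<Longrightarrow> maxel le A = A"
  unfolding maxel_def antichain_def by blast

lemma exists_maxel_above:
  assumes po: "poset X le" and A: "finite A" "A \<subseteq> X"
  shows "x \<in> A \<Longrightarrow> \<exists>m\<in>maxel le A. le x m"
proof (induction "card {z\<in>A. le x z}" arbitrary: x rule: less_induct)
  case (less x)
  have "x \<in> X"
    using less.prems A(2) by blast
  show ?case
  proof (cases "x \<in> maxel le A")
    case True
    then show ?thesis
      using poset_refl[OF po \<open>x \<in> X\<close>] by blast
  next
    case False
    then obtain y where y: "y \<in> A" "le x y" "y \<noteq> x"
      using less.prems unfolding maxel_def by blast
    have "y \<in> X"
      using y(1) A(2) by blast
    have "{z\<in>A. le y z} \<subset> {z\<in>A. le x z}"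
    proof
      show "{z\<in>A. le y z} \<subseteq> {z\<in>A. le x z}"
        using poset_trans[OF po \<open>x \<in> X\<close> \<open>y \<in> X\<close> _ y(2)] A(2) by blast
      have "x \<notin> {z\<in>A. le y z}"
        using poset_antisym[OF po \<open>x \<in> X\<close> \<open>y \<in> X\<close> y(2)] y(3) by blast
      moreover have "x \<in> {z\<in>A. le x z}"
        using poset_refl[OF po \<open>x \<in> X\<close>] less.prems by blast
      ultimately show "{z\<in>A. le y z} \<noteq> {z\<in>A. le x z}"
        by blast
    qed
    then have "card {z\<in>A. le y z} < card {z\<in>A. le x z}"
      using A(1) by (simp add: psubset_card_mono)
    then obtain m where m: "m \<in> maxel le A" "le y m"
      using less.hyps y(1) by blast
    have "m \<in> X"
      using maxel_memD[OF m(1)] A(2) by blast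
    then show ?thesis
      using poset_trans[OF po \<open>x \<in> X\<close> \<open>y \<in> X\<close> _ y(2) m(2)] m(1) by blast
  qed
qed

lemma maxel_nonempty: "poset X le \<Longrightarrow> finite A \<Longrightarrow> A \<subseteq> X \<Longrightarrow> A \<noteq> {} \<Longrightarrow> maxel le A \<noteq> {}"
  using exists_maxel_above by fastforce

lemma maxel_Times:
  assumes "poset X1 le1" "poset X2 le2" "A \<subseteq> X1" "B \<subseteq> X2"
  shows "maxel (prod_le le1 le2) (A \<times> B) = maxel le1 A \<times> maxel le2 B"
proof
  show "maxel le1 A \<times> maxel le2 B \<subseteq> maxel (prod_le le1 le2) (A \<times> B)"
    unfolding maxel_def prod_le_def by auto
  show "maxel (prod_le le1 le2) (A \<times> B) \<subseteq> maxel le1 A \<times> maxel le2 B"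
  proof
    fix p assume p: "p \<in> maxel (prod_le le1 le2) (A \<times> B)"
    obtain a b where [simp]: "p = (a, b)"
      by fastforce
    have "a \<in> A" "b \<in> B"
      using maxel_memD[OF p] by auto
    then have "le1 a a" "le2 b b"
      using poset_refl[OF assms(1)] poset_refl[OF assms(2)] assms(3,4) by blast+
    with p \<open>a \<in> A\<close> \<open>b \<in> B\<close> show "p \<in> maxel le1 A \<times> maxel le2 B"
      unfolding maxel_def prod_le_def by fastforce
  qed
qed

lemma image_below_image_maxel:
  assumes pX: "poset X leX" and f: "monotone_map X leX Y leY f"
    and A: "finite A" "A \<subseteq> X" and "y \<in> f ` A"
  shows "\<exists>m\<in>maxel leX A. leY y (f m)"
proof -
  obtain a where a: "a \<in> A" "y = f a"
    using \<open>y \<in> f ` A\<close> by blast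
  obtain m where m: "m \<in> maxel leX A" "leX a m"
    using exists_maxel_above[OF pX A a(1)] by blast
  have "leY (f a) (f m)"
    using monotone_mapD[OF f] a(1) maxel_memD[OF m(1)] A(2) m(2) by blast
  then show ?thesis
    using a(2) m(1) by blast
qed

lemma maxel_image_maxel:
  assumes pX: "poset X leX" and pY: "poset Y leY" and f: "monotone_map X leX Y leY f"
    and A: "finite A" "A \<subseteq> X"
  shows "maxel leY (f ` A) = maxel leY (f ` maxel leX A)"
proof -
  have fA: "f ` A \<subseteq> Y"
    using monotone_map_image_subset[OF f A(2)] .
  note below_max = image_below_image_maxel[OF pX f A]
  show ?thesis
  proof
    show "maxel leY (f ` A) \<subseteq> maxel leY (f ` maxel leX A)"
    proof
      fix y assume y: "y \<in> maxel leY (f ` A)"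
      then have "y \<in> f ` A"
        by (rule maxel_memD)
      then obtain m where m: "m \<in> maxel leX A" "leY y (f m)"
        using below_max by blast
      have "f m \<in> f ` A"
        using maxel_memD[OF m(1)] by blast
      then have "f m = y"
        using maxelD[OF y _ m(2)] by simp
      then have "y \<in> f ` maxel leX A"
        using m(1) by blast
      then show "y \<in> maxel leY (f ` maxel leX A)"
      proof (rule maxelI)
        show "w = y" if "w \<in> f ` maxel leX A" "leY y w" for w
          using maxelD[OF y] that by (blast dest: maxel_memD)
      qed
    qed
    show "maxel leY (f ` maxel leX A) \<subseteq> maxel leY (f ` A)"
    proof
      fix y assume y: "y \<in> maxel leY (f ` maxel leX A)"
      then have "y \<in> f ` A"
        by (blast dest: maxel_memD)
      then show "y \<in> maxel leY (f ` A)"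
      proof (rule maxelI)
        fix w assume w: "w \<in> f ` A" and "leY y w"
        obtain m where m: "m \<in> maxel leX A" "leY w (f m)"
          using below_max[OF w] by blast
        have "y \<in> Y" "w \<in> Y" "f m \<in> Y"
          using \<open>y \<in> f ` A\<close> w m(1) fA by (blast dest: maxel_memD)+
        then have "leY y (f m)"
          using poset_trans[OF pY] \<open>leY y w\<close> m(2) by blast
        then have "f m = y"
          using maxelD[OF y] m(1) by blast
        then show "w = y"
          using poset_antisym[OF pY] \<open>y \<in> Y\<close> \<open>w \<in> Y\<close> \<open>leY y w\<close> m(2) by blast
      qed
    qed
  qed
qed

lemma Mle_mutual_subset:
  assumes po: "poset X le" and S: "S \<in> Mset X le" and T: "T \<in> Mset X le"
    and "Mle le S T" "Mle le T S"
  shows "S \<subseteq> T"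
proof
  fix x assume "x \<in> S"
  then obtain y where y: "y \<in> T" "le x y"
    using \<open>Mle le S T\<close> unfolding Mle_def by blast
  then obtain z where z: "z \<in> S" "le y z"
    using \<open>Mle le T S\<close> unfolding Mle_def by blast
  have "x \<in> X" "y \<in> X" "z \<in> X"
    using \<open>x \<in> S\<close> y z S T by (auto simp: Mset_iff)
  then have "le x z"
    using poset_trans[OF po] y z by blast
  then have "z = x"
    using \<open>x \<in> S\<close> z S by (auto simp: Mset_iff antichain_def)
  then have "y = x"
    using poset_antisym[OF po] \<open>x \<in> X\<close> \<open>y \<in> X\<close> y z by blast
  then show "x \<in> T"
    using y by simp
qed

lemma Mle_trans:
  assumes po: "poset X le" and S: "S \<in> Mset X le" and T: "T \<in> Mset X le" and U: "U \<in> Mset X le"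
    and "Mle le S T" "Mle le T U"
  shows "Mle le S U"
  unfolding Mle_def
proof
  fix x assume "x \<in> S"
  then obtain y where y: "y \<in> T" "le x y"
    using \<open>Mle le S T\<close> unfolding Mle_def by blast
  then obtain z where z: "z \<in> U" "le y z"
    using \<open>Mle le T U\<close> unfolding Mle_def by blast
  have "x \<in> X" "y \<in> X" "z \<in> X"
    using \<open>x \<in> S\<close> y(1) z(1) S T U by (auto simp: Mset_iff)
  then show "\<exists>z\<in>U. le x z"
    using poset_trans[OF po] y(2) z by blast
qed

lemma poset_Mset:
  assumes po: "poset X le"
  shows "poset (Mset X le) (Mle le)"
  unfolding poset_def[of "Mset X le"]
proof (intro conjI ballI impI)
  show "Mle le S S" if "S \<in> Mset X le" for S
    using that poset_refl[OF po] by (auto simp: Mle_def Mset_iff)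
  show "S = T" if "S \<in> Mset X le" "T \<in> Mset X le" "Mle le S T \<and> Mle le T S" for S T
    using that Mle_mutual_subset[OF po] by blast
  show "Mle le S U" if "S \<in> Mset X le" "T \<in> Mset X le" "U \<in> Mset X le"
    "Mle le S T \<and> Mle le T U" for S T U
    using that Mle_trans[OF po] by blast
qed

lemma Mmax_map_in_Mset:
  assumes "poset Y leY" "monotone_map X leX Y leY f" "S \<in> Mset X leX"
  shows "Mmax_map leY f S \<in> Mset Y leY"
proof -
  have fS: "f ` S \<subseteq> Y" "finite (f ` S)" "f ` S \<noteq> {}"
    using assms(3) monotone_map_image_subset[OF assms(2)] by (auto simp: Mset_iff)
  have "maxel leY (f ` S) \<subseteq> Y"
    using maxel_subset fS(1) by (rule subset_trans)
  moreover have "finite (maxel leY (f ` S))"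
    using fS(2) maxel_subset by (rule finite_subset[rotated])
  moreover have "maxel leY (f ` S) \<noteq> {}"
    using maxel_nonempty[OF assms(1) fS(2,1,3)] .
  ultimately show ?thesis
    unfolding Mset_iff Mmax_map_def using antichain_maxel by blast
qed

lemma Mmax_map_monotone:
  assumes pY: "poset Y leY" and f: "monotone_map X leX Y leY f"
  shows "monotone_map (Mset X leX) (Mle leX) (Mset Y leY) (Mle leY) (Mmax_map leY f)"
  unfolding monotone_map_def
proof (intro conjI ballI impI)
  show "Mmax_map leY f S \<in> Mset Y leY" if "S \<in> Mset X leX" for S
    using Mmax_map_in_Mset[OF pY f that] .
next
  fix S T assume S: "S \<in> Mset X leX" and T: "T \<in> Mset X leX" and "Mle leX S T"
  show "Mle leY (Mmax_map leY f S) (Mmax_map leY f T)"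
    unfolding Mle_def Mmax_map_def
  proof
    fix y assume "y \<in> maxel leY (f ` S)"
    then obtain s where s: "s \<in> S" "y = f s"
      by (blast dest: maxel_memD)
    obtain t where t: "t \<in> T" "leX s t"
      using \<open>Mle leX S T\<close> s(1) unfolding Mle_def by blast
    have "S \<subseteq> X" "T \<subseteq> X" "finite (f ` T)"
      using S T by (simp_all add: Mset_iff)
    have fT: "f ` T \<subseteq> Y"
      using monotone_map_image_subset[OF f \<open>T \<subseteq> X\<close>] .
    obtain m where m: "m \<in> maxel leY (f ` T)" "leY (f t) m"
      using exists_maxel_above[OF pY \<open>finite (f ` T)\<close> fT] t(1) by blast
    have "f s \<in> Y" "f t \<in> Y" "m \<in> Y"
      using s(1) t(1) maxel_memD[OF m(1)] fT monotone_map_image_subset[OF f \<open>S \<subseteq> X\<close>]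
      by blast+
    moreover have "leY (f s) (f t)"
      using monotone_mapD[OF f] s(1) t \<open>S \<subseteq> X\<close> \<open>T \<subseteq> X\<close> by blast
    ultimately have "leY y m"
      using poset_trans[OF pY] m(2) s(2) by metis
    then show "\<exists>y'\<in>maxel leY (f ` T). leY y y'"
      using m(1) by blast
  qed
qed

lemma Mmax_map_id: "S \<in> Mset X le \<Longrightarrow> Mmax_map le id S = S"
  by (simp add: Mmax_map_def Mset_iff maxel_antichain_eq)

lemma Mmax_map_comp:
  assumes "poset X leX" "poset Y leY" "poset Z leZ"
    and "monotone_map X leX Y leY f" "monotone_map Y leY Z leZ g" and "S \<in> Mset X leX"
  shows "Mmax_map leZ (g \<circ> f) S = Mmax_map leZ g (Mmax_map leY f S)"
proof -
  have "finite (f ` S)" "f ` S \<subseteq> Y"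
    using assms(6) monotone_map_image_subset[OF assms(4)] by (simp_all add: Mset_iff)
  then show ?thesis
    unfolding Mmax_map_def image_comp[symmetric]
    using maxel_image_maxel[OF assms(2,3,5)] by blast
qed

lemma Meps_monotone: "monotone_map UNIV unit_le (Mset UNIV unit_le) (Mle unit_le) Meps"
  by (auto simp: monotone_map_def Mset_def Meps_def Mle_def unit_le_def)

lemma Mmu_monotone:
  "monotone_map (Mset X leX \<times> Mset Y leY) (prod_le (Mle leX) (Mle leY))
     (Mset (X \<times> Y) (prod_le leX leY)) (Mle (prod_le leX leY)) (\<lambda>p. Mmu (fst p) (snd p))"
  unfolding monotone_map_def
proof (intro conjI ballI impI)
  show "Mmu (fst p) (snd p) \<in> Mset (X \<times> Y) (prod_le leX leY)"
    if "p \<in> Mset X leX \<times> Mset Y leY" for p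
    using that by (auto simp: Mset_iff Mmu_def intro!: antichain_Times)
  show "Mle (prod_le leX leY) (Mmu (fst p) (snd p)) (Mmu (fst q) (snd q))"
    if "prod_le (Mle leX) (Mle leY) p q" for p q
    using that unfolding Mle_def prod_le_def Mmu_def by fastforce
qed

lemma Mmu_natural:
  assumes "poset X' leX'" "poset Y' leY'"
    and "monotone_map X leX X' leX' f" "monotone_map Y leY Y' leY' g"
    and "S \<in> Mset X leX" "T \<in> Mset Y leY"
  shows "Mmu (Mmax_map leX' f S) (Mmax_map leY' g T)
    = Mmax_map (prod_le leX' leY') (\<lambda>p. (f (fst p), g (snd p))) (Mmu S T)"
proof -
  have "(\<lambda>p. (f (fst p), g (snd p))) ` (S \<times> T) = f ` S \<times> g ` T"
    by force
  moreover have "f ` S \<subseteq> X'" "g ` T \<subseteq> Y'"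
    using assms(5,6) monotone_map_image_subset[OF assms(3)] monotone_map_image_subset[OF assms(4)]
    by (simp_all add: Mset_iff)
  ultimately show ?thesis
    unfolding Mmu_def Mmax_map_def using maxel_Times[OF assms(1,2)] by simp
qed

lemma Mmax_map_assoc:
  assumes "S \<in> Mset X leX" "T \<in> Mset Y leY" "U \<in> Mset Z leZ"
  shows "Mmax_map (prod_le leX (prod_le leY leZ)) assoc_map (Mmu (Mmu S T) U) = Mmu S (Mmu T U)"
proof -
  have "assoc_map ` ((S \<times> T) \<times> U) = S \<times> (T \<times> U)"
    by (force simp: assoc_map_def)
  moreover have "antichain (prod_le leX (prod_le leY leZ)) (S \<times> (T \<times> U))"
    using assms by (intro antichain_Times) (auto simp: Mset_iff)
  ultimately show ?thesis
    unfolding Mmax_map_def Mmu_def by (simp add: maxel_antichain_eq)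
qed

lemma Mmax_map_lunit: "S \<in> Mset X le \<Longrightarrow> Mmax_map le lunit_map (Mmu (Meps ()) S) = S"
proof -
  have "lunit_map ` ({()} \<times> S) = S"
    by (force simp: lunit_map_def)
  then show "S \<in> Mset X le \<Longrightarrow> ?thesis"
    by (simp add: Mmax_map_def Mmu_def Meps_def Mset_iff maxel_antichain_eq)
qed

lemma Mmax_map_runit: "S \<in> Mset X le \<Longrightarrow> Mmax_map le runit_map (Mmu S (Meps ())) = S"
proof -
  have "runit_map ` (S \<times> {()}) = S"
    by (force simp: runit_map_def)
  then show "S \<in> Mset X le \<Longrightarrow> ?thesis"
    by (simp add: Mmax_map_def Mmu_def Meps_def Mset_iff maxel_antichain_eq)
qed

theorem propositionD11:
  fixes X :: "'a set" and leX :: "'a \<Rightarrow> 'a \<Rightarrow> bool"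
    and Y :: "'b set" and leY :: "'b \<Rightarrow> 'b \<Rightarrow> bool"
    and Z :: "'c set" and leZ :: "'c \<Rightarrow> 'c \<Rightarrow> bool"
    and X' :: "'d set" and leX' :: "'d \<Rightarrow> 'd \<Rightarrow> bool"
    and Y' :: "'e set" and leY' :: "'e \<Rightarrow> 'e \<Rightarrow> bool"
    and f :: "'a \<Rightarrow> 'd" and g :: "'b \<Rightarrow> 'e" and h :: "'d \<Rightarrow> 'c"
  assumes "poset X leX" and "poset Y leY" and "poset Z leZ"
    and "poset X' leX'" and "poset Y' leY'"
    and "monotone_map X leX X' leX' f" and "monotone_map Y leY Y' leY' g"
    and "monotone_map X' leX' Z leZ h"
  shows
    \<comment> \<open>M_max is a functor Ord \<rightarrow> Ord\<close>
    "poset (Mset X leX) (Mle leX)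
     \<and> monotone_map (Mset X leX) (Mle leX) (Mset X' leX') (Mle leX') (Mmax_map leX' f)
     \<and> (\<forall>S\<in>Mset X leX. Mmax_map leX id S = S)
     \<and> (\<forall>S\<in>Mset X leX. Mmax_map leZ (h \<circ> f) S = Mmax_map leZ h (Mmax_map leX' f S))
     \<comment> \<open>the structure maps are morphisms of Ord\<close>
     \<and> monotone_map (UNIV :: unit set) unit_le (Mset UNIV unit_le) (Mle unit_le) Meps
     \<and> monotone_map (Mset X leX \<times> Mset Y leY) (prod_le (Mle leX) (Mle leY))
         (Mset (X \<times> Y) (prod_le leX leY)) (Mle (prod_le leX leY)) (\<lambda>p. Mmu (fst p) (snd p))
     \<comment> \<open>naturality of \<mu>\<close>
     \<and> (\<forall>S\<in>Mset X leX. \<forall>T\<in>Mset Y leY.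
          Mmu (Mmax_map leX' f S) (Mmax_map leY' g T)
          = Mmax_map (prod_le leX' leY') (\<lambda>p. (f (fst p), g (snd p))) (Mmu S T))
     \<comment> \<open>associativity coherence\<close>
     \<and> (\<forall>S\<in>Mset X leX. \<forall>T\<in>Mset Y leY. \<forall>U\<in>Mset Z leZ.
          Mmax_map (prod_le leX (prod_le leY leZ)) assoc_map (Mmu (Mmu S T) U)
          = Mmu S (Mmu T U))
     \<comment> \<open>unit coherences\<close>
     \<and> (\<forall>S\<in>Mset X leX. Mmax_map leX lunit_map (Mmu (Meps ()) S) = S)
     \<and> (\<forall>S\<in>Mset X leX. Mmax_map leX runit_map (Mmu S (Meps ())) = S)"
  using assms
  by (simp add: poset_Mset Mmax_map_monotone Mmax_map_id Mmax_map_comp Meps_monotone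
      Mmu_monotone Mmu_natural Mmax_map_assoc Mmax_map_lunit Mmax_map_runit)

end
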